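(* Let $K$ be a number field, $L/K$ a (possibly infinite) Galois extension in which every element of $\operatorname{Gal}(L/K)$ has finite order, and $E/K$ an elliptic curve. Let $q$ be an odd prime power with $E(L)[q]\cong\mathbb{Z}/q\mathbb{Z}$. For $\sigma\in\operatorname{Gal}(L/K)$ let $\operatorname{ord}(\sigma)$ be its order, and let $\phi$ be Euler's totient function. (1) If $\gcd(\phi(q),\operatorname{ord}(\sigma))=1$ for all $\sigma\in\operatorname{Gal}(L/K)$, then $E(L)[q]=E(K)[q]$. (2) If $\gcd(\phi(q),\operatorname{ord}(\sigma))\le 2$ for all $\sigma\in\operatorname{Gal}(L/K)$, then there is $d\in K$ with $\sqrt d\in L$ such that $E(L)[q]\cong E_d(L)[q]=E_d(K)[q]$.
   Context: $E(F)[q]$ denotes the $q$-torsion points of $E$ defined over $F$ (points killed by $q$). $E_d$ denotes the quadratic twist of $E$ by $d$. *)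

theory Defs
  imports Complex_Main "HOL-Computational_Algebra.Polynomial" "HOL-Number_Theory.Totient"
begin

(* All fields are modelled as subfields of the complex numbers. *)

definition is_subfield :: "complex set \<Rightarrow> bool" where
  "is_subfield F \<longleftrightarrow> 0 \<in> F \<and> 1 \<in> F \<and>
     (\<forall>x\<in>F. \<forall>y\<in>F. x + y \<in> F \<and> x * y \<in> F) \<and>
     (\<forall>x\<in>F. - x \<in> F) \<and> (\<forall>x\<in>F. x \<noteq> 0 \<longrightarrow> inverse x \<in> F)"

definition number_field :: "complex set \<Rightarrow> bool" where
  "number_field K \<longleftrightarrow> is_subfield K \<and>
     (\<exists>B. set B \<subseteq> K \<and> (\<forall>x\<in>K. \<exists>c. x = (\<Sum>i<length B. of_real (c i) * B ! i) \<and> (\<forall>i. c i \<in> \<rat>)))"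

definition poly_over :: "complex set \<Rightarrow> complex poly \<Rightarrow> bool" where
  "poly_over K p \<longleftrightarrow> (\<forall>i. coeff p i \<in> K)"

definition irreducible_over :: "complex set \<Rightarrow> complex poly \<Rightarrow> bool" where
  "irreducible_over K p \<longleftrightarrow> poly_over K p \<and> degree p \<ge> 1 \<and>
     (\<forall>g h. poly_over K g \<longrightarrow> poly_over K h \<longrightarrow> p = g * h \<longrightarrow> degree g = 0 \<or> degree h = 0)"

definition splits_in :: "complex set \<Rightarrow> complex poly \<Rightarrow> bool" where
  "splits_in L p \<longleftrightarrow> (\<exists>c rs. set rs \<subseteq> L \<and> p = smult c (prod_list (map (\<lambda>r. [:- r, 1:]) rs)))"

(* Galois extension L/K (characteristic 0, so separability is automatic):
   L is an algebraic and normal extension of K *)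
definition galois_ext :: "complex set \<Rightarrow> complex set \<Rightarrow> bool" where
  "galois_ext L K \<longleftrightarrow> is_subfield K \<and> is_subfield L \<and> K \<subseteq> L \<and>
     (\<forall>\<alpha>\<in>L. \<exists>p. p \<noteq> 0 \<and> poly_over K p \<and> poly p \<alpha> = 0) \<and>
     (\<forall>p. irreducible_over K p \<longrightarrow> (\<exists>\<alpha>\<in>L. poly p \<alpha> = 0) \<longrightarrow> splits_in L p)"

(* Gal(L/K): field automorphisms of L fixing K pointwise (values off L irrelevant) *)
definition Gal :: "complex set \<Rightarrow> complex set \<Rightarrow> (complex \<Rightarrow> complex) set" where
  "Gal L K = {\<sigma>. bij_betw \<sigma> L L \<and> (\<forall>x\<in>L. \<forall>y\<in>L. \<sigma> (x + y) = \<sigma> x + \<sigma> y \<and> \<sigma> (x * y) = \<sigma> x * \<sigma> y)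
                 \<and> (\<forall>x\<in>K. \<sigma> x = x)}"

definition has_finite_order :: "complex set \<Rightarrow> (complex \<Rightarrow> complex) \<Rightarrow> bool" where
  "has_finite_order L \<sigma> \<longleftrightarrow> (\<exists>n>0. \<forall>x\<in>L. (\<sigma> ^^ n) x = x)"

definition aut_ord :: "complex set \<Rightarrow> (complex \<Rightarrow> complex) \<Rightarrow> nat" where
  "aut_ord L \<sigma> = (LEAST n. n > 0 \<and> (\<forall>x\<in>L. (\<sigma> ^^ n) x = x))"

datatype ecpt = Inf | Aff complex complex

definition elliptic :: "complex \<Rightarrow> complex \<Rightarrow> bool" where
  "elliptic a b \<longleftrightarrow> 4 * a ^ 3 + 27 * b ^ 2 \<noteq> 0"

definition ec_points :: "complex \<Rightarrow> complex \<Rightarrow> complex set \<Rightarrow> ecpt set" where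
  "ec_points a b F = {Inf} \<union> {Aff x y | x y. x \<in> F \<and> y \<in> F \<and> y ^ 2 = x ^ 3 + a * x + b}"

fun ec_add :: "complex \<Rightarrow> complex \<Rightarrow> ecpt \<Rightarrow> ecpt \<Rightarrow> ecpt" where
  "ec_add a b Inf P = P"
| "ec_add a b (Aff x y) Inf = Aff x y"
| "ec_add a b (Aff x1 y1) (Aff x2 y2) =
     (if x1 = x2 \<and> y1 = - y2 then Inf
      else (let l = (if x1 = x2 then (3 * x1 ^ 2 + a) / (2 * y1) else (y2 - y1) / (x2 - x1));
                x3 = l ^ 2 - x1 - x2
            in Aff x3 (l * (x1 - x3) - y1)))"

definition ec_smul :: "complex \<Rightarrow> complex \<Rightarrow> nat \<Rightarrow> ecpt \<Rightarrow> ecpt" where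
  "ec_smul a b n P = (ec_add a b P ^^ n) Inf"

definition ec_torsion :: "complex \<Rightarrow> complex \<Rightarrow> complex set \<Rightarrow> nat \<Rightarrow> ecpt set" where
  "ec_torsion a b F q = {P \<in> ec_points a b F. ec_smul a b q P = Inf}"

definition cyclic_of_order :: "complex \<Rightarrow> complex \<Rightarrow> ecpt set \<Rightarrow> nat \<Rightarrow> bool" where
  "cyclic_of_order a b S q \<longleftrightarrow>
     (\<exists>f. bij_betw f {0..<q} S \<and> (\<forall>i<q. \<forall>j<q. f ((i + j) mod q) = ec_add a b (f i) (f j)))"

definition ec_group_iso :: "complex \<Rightarrow> complex \<Rightarrow> ecpt set \<Rightarrow> complex \<Rightarrow> complex \<Rightarrow> ecpt set \<Rightarrow> bool" where
  "ec_group_iso a b S a' b' T \<longleftrightarrow>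
     (\<exists>f. bij_betw f S T \<and> (\<forall>P\<in>S. \<forall>Q\<in>S. f (ec_add a b P Q) = ec_add a' b' (f P) (f Q)))"

definition twist_a :: "complex \<Rightarrow> complex \<Rightarrow> complex" where "twist_a d a = d ^ 2 * a"
definition twist_b :: "complex \<Rightarrow> complex \<Rightarrow> complex" where "twist_b d b = d ^ 3 * b"

end

theory Submission
  imports
    Defs
    "HOL-Computational_Algebra.Fundamental_Theorem_Algebra"
    "HOL-Number_Theory.Pocklington"
begin

(* Every \<sigma> in Gal(L/K) maps E(L)[q] into itself compatibly with the group law. As this group is
   cyclic of order q, \<sigma> acts on it as multiplication by a unit c modulo q with c^ord(\<sigma>) = 1, and by
   Euler's theorem c^gcd(\<phi>(q), ord(\<sigma>)) = 1.
   If the gcd is 1, then c = 1, so Gal(L/K) fixes E(L)[q] pointwise; since the fixed field of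
   Gal(L/K) is K (K-embeddings of subrings of L extend to automorphisms of L by Zorn's lemma),
   E(L)[q] = E(K)[q].
   If the gcd is at most 2, then c^2 = 1, which modulo the odd prime power q forces c = \<plusminus>1.
   Choose a generator (x0, y0) and put d = y0^2. The map (x, y) \<mapsto> (d x, d y0 y) is an isomorphism
   E(L)[q] \<rightarrow> E_d(L)[q], and on its image the sign by which \<sigma> acts on y cancels against the sign by
   which it acts on y0, so Gal(L/K) fixes E_d(L)[q] pointwise and E_d(L)[q] = E_d(K)[q]. *)

section \<open>Subrings of the complex numbers and polynomials over them\<close>

definition is_subring :: "complex set \<Rightarrow> bool" where
  "is_subring D \<longleftrightarrow>
     0 \<in> D \<and> 1 \<in> D \<and> (\<forall>x\<in>D. \<forall>y\<in>D. x + y \<in> D \<and> x * y \<in> D) \<and> (\<forall>x\<in>D. - x \<in> D)"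

lemma subfield_is_subring: "is_subfield F \<Longrightarrow> is_subring F"
  by (simp add: is_subfield_def is_subring_def)

lemma subfield_inverse: "is_subfield F \<Longrightarrow> x \<in> F \<Longrightarrow> inverse x \<in> F"
  by (cases "x = 0") (auto simp add: is_subfield_def)

lemma poly_over_coeff: "poly_over D p \<Longrightarrow> Polynomial.coeff p n \<in> D"
  by (simp add: poly_over_def)

lemma poly_over_pCons: "poly_over D (pCons a p) \<longleftrightarrow> a \<in> D \<and> poly_over D p"
  unfolding poly_over_def by (metis coeff_pCons_0 coeff_pCons_Suc not0_implies_Suc)

lemma poly_over_mono: "poly_over D p \<Longrightarrow> D \<subseteq> D' \<Longrightarrow> poly_over D' p"
  by (auto simp: poly_over_def)

context
  fixes D :: "complex set"
  assumes D: "is_subring D"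
begin

lemma subring_0: "0 \<in> D" and subring_1: "1 \<in> D"
  and subring_add: "x \<in> D \<Longrightarrow> y \<in> D \<Longrightarrow> x + y \<in> D"
  and subring_mult: "x \<in> D \<Longrightarrow> y \<in> D \<Longrightarrow> x * y \<in> D"
  and subring_uminus: "x \<in> D \<Longrightarrow> - x \<in> D"
  using D by (simp_all add: is_subring_def)

lemma subring_diff: "x \<in> D \<Longrightarrow> y \<in> D \<Longrightarrow> x - y \<in> D"
  using subring_add[of x "- y"] subring_uminus[of y] by simp

lemma subring_power: "x \<in> D \<Longrightarrow> x ^ n \<in> D"
  by (induction n) (auto intro: subring_1 subring_mult)

lemma subring_of_nat: "of_nat n \<in> D"
  by (induction n) (auto intro: subring_0 subring_1 subring_add)

lemma subring_numeral: "numeral n \<in> D"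
  using subring_of_nat[of "numeral n"] by simp

lemma subring_sum: "(\<And>i. i \<in> A \<Longrightarrow> f i \<in> D) \<Longrightarrow> sum f A \<in> D"
  by (induction A rule: infinite_finite_induct) (auto intro: subring_0 subring_add)

lemma poly_over_const: "c \<in> D \<Longrightarrow> poly_over D [:c:]"
  by (simp add: poly_over_def coeff_pCons subring_0 split: nat.split)

lemma poly_over_X: "poly_over D [:0, 1:]"
  by (simp add: poly_over_def coeff_pCons subring_0 subring_1 split: nat.split)

lemma poly_over_add: "poly_over D p \<Longrightarrow> poly_over D p' \<Longrightarrow> poly_over D (p + p')"
  by (simp add: poly_over_def subring_add)

lemma poly_over_uminus: "poly_over D p \<Longrightarrow> poly_over D (- p)"
  by (simp add: poly_over_def subring_uminus)

lemma poly_over_diff: "poly_over D p \<Longrightarrow> poly_over D p' \<Longrightarrow> poly_over D (p - p')"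
  by (simp add: poly_over_def subring_diff)

lemma poly_over_mult: "poly_over D p \<Longrightarrow> poly_over D p' \<Longrightarrow> poly_over D (p * p')"
  by (simp add: poly_over_def coeff_mult subring_sum subring_mult)

lemma poly_over_smult: "c \<in> D \<Longrightarrow> poly_over D p \<Longrightarrow> poly_over D (Polynomial.smult c p)"
  by (simp add: poly_over_def subring_mult)

lemma poly_over_monom: "c \<in> D \<Longrightarrow> poly_over D (Polynomial.monom c n)"
  by (simp add: poly_over_def subring_0)

lemma poly_over_pderiv: "poly_over D p \<Longrightarrow> poly_over D (pderiv p)"
  by (simp add: poly_over_def coeff_pderiv subring_mult subring_of_nat del: of_nat_Suc)

lemma poly_over_poly: "poly_over D p \<Longrightarrow> x \<in> D \<Longrightarrow> poly p x \<in> D"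
  by (induction p) (auto simp: poly_over_pCons intro: subring_0 subring_add subring_mult)

end

lemma subfield_divide: "is_subfield F \<Longrightarrow> x \<in> F \<Longrightarrow> y \<in> F \<Longrightarrow> x / y \<in> F"
  using subring_mult[OF subfield_is_subring, of F x "inverse y"] subfield_inverse[of F y]
  by (simp add: divide_inverse)

locale subring_hom =
  fixes D :: "complex set" and \<tau> :: "complex \<Rightarrow> complex"
  assumes subring: "is_subring D"
    and hom_add: "x \<in> D \<Longrightarrow> y \<in> D \<Longrightarrow> \<tau> (x + y) = \<tau> x + \<tau> y"
    and hom_mult: "x \<in> D \<Longrightarrow> y \<in> D \<Longrightarrow> \<tau> (x * y) = \<tau> x * \<tau> y"
    and hom_0: "\<tau> 0 = 0" and hom_1: "\<tau> 1 = 1"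
begin

lemma hom_uminus: "x \<in> D \<Longrightarrow> \<tau> (- x) = - \<tau> x"
  using hom_add[of x "- x"] subring_uminus[OF subring, of x] hom_0
  by (simp add: eq_neg_iff_add_eq_0 add.commute)

lemma hom_diff: "x \<in> D \<Longrightarrow> y \<in> D \<Longrightarrow> \<tau> (x - y) = \<tau> x - \<tau> y"
  using hom_add[of x "- y"] hom_uminus[of y] subring_uminus[OF subring, of y] by simp

lemma hom_sum: "(\<And>i. i \<in> A \<Longrightarrow> f i \<in> D) \<Longrightarrow> \<tau> (sum f A) = (\<Sum>i\<in>A. \<tau> (f i))"
  by (induction A rule: infinite_finite_induct) (auto simp: hom_0 hom_add subring_sum[OF subring])

lemma coeff_map_hom: "Polynomial.coeff (map_poly \<tau> p) n = \<tau> (Polynomial.coeff p n)"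
  by (simp add: coeff_map_poly hom_0)

lemma map_poly_hom_add:
  "poly_over D p \<Longrightarrow> poly_over D p' \<Longrightarrow> map_poly \<tau> (p + p') = map_poly \<tau> p + map_poly \<tau> p'"
  by (rule poly_eqI) (simp add: coeff_map_hom hom_add poly_over_coeff)

lemma map_poly_hom_uminus: "poly_over D p \<Longrightarrow> map_poly \<tau> (- p) = - map_poly \<tau> p"
  by (rule poly_eqI) (simp add: coeff_map_hom hom_uminus poly_over_coeff)

lemma map_poly_hom_diff:
  "poly_over D p \<Longrightarrow> poly_over D p' \<Longrightarrow> map_poly \<tau> (p - p') = map_poly \<tau> p - map_poly \<tau> p'"
  by (rule poly_eqI) (simp add: coeff_map_hom hom_diff poly_over_coeff)

lemma map_poly_hom_smult:
  "c \<in> D \<Longrightarrow> poly_over D p \<Longrightarrow>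
    map_poly \<tau> (Polynomial.smult c p) = Polynomial.smult (\<tau> c) (map_poly \<tau> p)"
  by (rule poly_eqI) (simp add: coeff_map_hom hom_mult poly_over_coeff)

lemma map_poly_hom_mult:
  "poly_over D p \<Longrightarrow> poly_over D p' \<Longrightarrow> map_poly \<tau> (p * p') = map_poly \<tau> p * map_poly \<tau> p'"
  by (rule poly_eqI)
    (simp add: coeff_map_hom coeff_mult hom_sum hom_mult poly_over_coeff subring_mult[OF subring])

lemma map_poly_hom_monom: "map_poly \<tau> (Polynomial.monom c n) = Polynomial.monom (\<tau> c) n"
  by (rule poly_eqI) (simp add: coeff_map_hom hom_0)

lemma map_poly_hom_const: "map_poly \<tau> [:c:] = [:\<tau> c:]"
  by (simp add: hom_0 map_poly_pCons)

lemma poly_map_poly_hom: "poly_over D p \<Longrightarrow> x \<in> D \<Longrightarrow> \<tau> (poly p x) = poly (map_poly \<tau> p) (\<tau> x)"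
  by (induction p)
    (simp_all add: poly_over_pCons map_poly_pCons hom_0 hom_add hom_mult
      poly_over_poly[OF subring] subring_mult[OF subring])

lemma degree_map_poly_hom:
  assumes inj: "\<And>x. x \<in> D \<Longrightarrow> \<tau> x = 0 \<Longrightarrow> x = 0" and p: "poly_over D p"
  shows "degree (map_poly \<tau> p) = degree p"
proof (cases "p = 0")
  case False
  then have "\<tau> (lead_coeff p) \<noteq> 0" using inj[OF poly_over_coeff[OF p, of "degree p"]] by auto
  then have "degree p \<le> degree (map_poly \<tau> p)" by (intro le_degree) (simp add: coeff_map_hom)
  moreover have "degree (map_poly \<tau> p) \<le> degree p"
    by (rule degree_le) (simp add: coeff_map_hom coeff_eq_0 hom_0)
  ultimately show ?thesis by simp
qed (simp add: hom_0)

end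

section \<open>Minimal polynomials\<close>

definition is_min_poly :: "complex set \<Rightarrow> complex \<Rightarrow> complex poly \<Rightarrow> bool" where
  "is_min_poly D \<gamma> m \<longleftrightarrow> poly_over D m \<and> m \<noteq> 0 \<and> poly m \<gamma> = 0 \<and>
     (\<forall>p. poly_over D p \<and> p \<noteq> 0 \<and> poly p \<gamma> = 0 \<longrightarrow> degree m \<le> degree p)"

lemma min_poly_exists:
  assumes "poly_over D p" "p \<noteq> 0" "poly p \<gamma> = 0"
  obtains m where "is_min_poly D \<gamma> m"
proof -
  have "\<exists>m. (poly_over D m \<and> m \<noteq> 0 \<and> poly m \<gamma> = 0) \<and>
      (\<forall>p. poly_over D p \<and> p \<noteq> 0 \<and> poly p \<gamma> = 0 \<longrightarrow> degree m \<le> degree p)"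
    by (rule ex_has_least_nat[of _ p]) (use assms in auto)
  then show ?thesis using that unfolding is_min_poly_def by blast
qed

lemma min_poly_degree: "is_min_poly D \<gamma> m \<Longrightarrow> 1 \<le> degree m"
  by (cases "degree m") (auto simp: is_min_poly_def elim: degree_eq_zeroE)

lemma min_poly_irreducible:
  assumes m: "is_min_poly D \<gamma> m"
  shows "irreducible_over D m"
  unfolding irreducible_over_def
proof (intro conjI allI impI)
  show "poly_over D m" using m by (simp add: is_min_poly_def)
  show "1 \<le> degree m" using min_poly_degree[OF m] .
  fix g h assume g: "poly_over D g" and h: "poly_over D h" and mgh: "m = g * h"
  have nz: "g \<noteq> 0" "h \<noteq> 0" using m mgh by (auto simp: is_min_poly_def)
  have deg: "degree m = degree g + degree h" using mgh nz by (simp add: degree_mult_eq)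
  have "poly g \<gamma> = 0 \<or> poly h \<gamma> = 0" using m mgh by (simp add: is_min_poly_def)
  then have "degree m \<le> degree g \<or> degree m \<le> degree h"
    using m g h nz unfolding is_min_poly_def by blast
  then show "degree g = 0 \<or> degree h = 0" using deg by linarith
qed

lemma min_poly_root_simple:
  assumes D: "is_subring D" and m: "is_min_poly D \<gamma> m"
  shows "poly (pderiv m) \<gamma> \<noteq> 0"
proof
  assume "poly (pderiv m) \<gamma> = 0"
  moreover have "pderiv m \<noteq> 0" using min_poly_degree[OF m] by (simp add: pderiv_eq_0_iff)
  moreover have "poly_over D (pderiv m)"
    using poly_over_pderiv[OF D] m by (simp add: is_min_poly_def)
  ultimately have "degree m \<le> degree (pderiv m)" using m unfolding is_min_poly_def by blast
  then show False using degree_pderiv[of m] min_poly_degree[OF m] by simp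
qed

lemma min_poly_degree_one:
  assumes D: "is_subfield D" and m: "is_min_poly D \<gamma> m" and deg: "degree m = 1"
  shows "\<gamma> \<in> D"
proof -
  have mD: "poly_over D m" and root: "poly m \<gamma> = 0" and "m \<noteq> 0"
    using m by (auto simp: is_min_poly_def)
  then have c1: "Polynomial.coeff m 1 \<noteq> 0" using deg by (metis leading_coeff_0_iff)
  have "Polynomial.coeff m 0 + Polynomial.coeff m 1 * \<gamma> = 0"
    using root deg by (simp add: poly_altdef)
  then have "\<gamma> = - Polynomial.coeff m 0 / Polynomial.coeff m 1"
    using c1 by (simp add: field_simps add_eq_0_iff2)
  moreover have "- Polynomial.coeff m 0 / Polynomial.coeff m 1 \<in> D"
    using D mD by (simp add: subfield_divide subring_uminus subfield_is_subring poly_over_coeff)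
  ultimately show ?thesis by simp
qed

lemma root_of_split_poly:
  assumes "splits_in L p" "p \<noteq> 0" "poly p \<delta> = 0"
  shows "\<delta> \<in> L"
proof -
  obtain c rs where rs: "set rs \<subseteq> L"
      "p = Polynomial.smult c (prod_list (map (\<lambda>r. [:- r, 1:]) rs))"
    using assms(1) unfolding splits_in_def by blast
  have "poly p \<delta> = c * prod_list (map (\<lambda>r. \<delta> - r) rs)"
    unfolding rs(2) by (induction rs) (auto simp: algebra_simps)
  then have "prod_list (map (\<lambda>r. \<delta> - r) rs) = 0" using rs assms(2,3) by auto
  then obtain r where "r \<in> set rs" "\<delta> = r" by (auto simp: prod_list_zero_iff)
  then show ?thesis using rs(1) by auto
qed

lemma (in subring_hom) min_poly_root_transfer:
  assumes inj: "\<And>x. x \<in> D \<Longrightarrow> \<tau> x = 0 \<Longrightarrow> x = 0"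
    and m: "is_min_poly D \<gamma> m" and root: "poly (map_poly \<tau> m) \<delta> = 0"
  shows "poly_over D p \<Longrightarrow> poly p \<gamma> = 0 \<Longrightarrow> poly (map_poly \<tau> p) \<delta> = 0"
proof (induction "degree p" arbitrary: p rule: less_induct)
  case less
  \<comment> \<open>Lower the degree by a pseudo-division step by m; the leading coefficient of m need not be
    invertible in D.\<close>
  show ?case
  proof (cases "p = 0")
    case False
    have mD: "poly_over D m" and "m \<noteq> 0" and mg: "poly m \<gamma> = 0"
      using m by (auto simp: is_min_poly_def)
    have dmp: "degree m \<le> degree p" using m less.prems False unfolding is_min_poly_def by blast
    have lc: "lead_coeff m \<in> D" "lead_coeff p \<in> D"
      using mD less.prems by (auto simp: poly_over_coeff)
    define k where "k = degree p - degree m"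
    define p' where
      "p' = Polynomial.smult (lead_coeff m) p
          - Polynomial.smult (lead_coeff p) (Polynomial.monom 1 k * m)"
    have p'D: "poly_over D p'" unfolding p'_def using lc mD less.prems subring
      by (intro poly_over_diff poly_over_smult poly_over_mult poly_over_monom subring_1) auto
    have p'_root: "poly p' \<gamma> = 0" unfolding p'_def using mg less.prems by (simp add: poly_monom)
    have "degree (Polynomial.monom (1::complex) k * m) \<le> degree p"
      using degree_mult_le[of "Polynomial.monom (1::complex) k" m]
        degree_monom_le[of "1::complex" k] dmp
      unfolding k_def by linarith
    then have "degree p' \<le> degree p" unfolding p'_def
      by (intro degree_diff_le degree_smult_le order.trans[OF degree_smult_le])
    moreover have "Polynomial.coeff p' (degree p) = 0"
      unfolding p'_def coeff_diff coeff_smult coeff_monom_mult using dmp k_def by simp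
    ultimately have "degree p' < degree p"
      using dmp min_poly_degree[OF m]
      by (metis le_neq_implies_less leading_coeff_0_iff not_one_le_zero degree_0 le_zero_eq)
    then have IH: "poly (map_poly \<tau> p') \<delta> = 0" using less.hyps p'D p'_root by blast
    have "map_poly \<tau> p' = Polynomial.smult (\<tau> (lead_coeff m)) (map_poly \<tau> p)
        - Polynomial.smult (\<tau> (lead_coeff p)) (Polynomial.monom 1 k * map_poly \<tau> m)"
      unfolding p'_def using lc mD less.prems subring
      by (simp add: map_poly_hom_diff map_poly_hom_smult map_poly_hom_mult map_poly_hom_monom hom_1
          poly_over_smult poly_over_mult poly_over_monom subring_1)
    then have "\<tau> (lead_coeff m) * poly (map_poly \<tau> p) \<delta> = 0" using IH root by (simp add: poly_monom)
    moreover have "\<tau> (lead_coeff m) \<noteq> 0" using inj[OF lc(1)] \<open>m \<noteq> 0\<close> by auto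
    ultimately show ?thesis by simp
  qed simp
qed

section \<open>The fixed field of a Galois group\<close>

lemma galois_ext_subfield_base: "galois_ext L K \<Longrightarrow> is_subfield K"
  and galois_ext_subfield: "galois_ext L K \<Longrightarrow> is_subfield L"
  and galois_ext_subset: "galois_ext L K \<Longrightarrow> K \<subseteq> L"
  by (simp_all add: galois_ext_def)

lemma galois_ext_normal:
  "galois_ext L K \<Longrightarrow> irreducible_over K p \<Longrightarrow> \<alpha> \<in> L \<Longrightarrow> poly p \<alpha> = 0 \<Longrightarrow> splits_in L p"
  unfolding galois_ext_def by blast

lemma galois_ext_min_poly:
  assumes "galois_ext L K" "\<alpha> \<in> L" "K \<subseteq> D"
  obtains m where "is_min_poly D \<alpha> m"
proof -
  obtain p where "p \<noteq> 0" "poly_over K p" "poly p \<alpha> = 0"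
    using assms(1,2) unfolding galois_ext_def by blast
  then show ?thesis using min_poly_exists poly_over_mono assms(3) that by metis
qed

lemma inverse_in_intermediate_ring:
  assumes LK: "galois_ext L K" and S: "is_subring S" "K \<subseteq> S" "S \<subseteq> L" and z: "z \<in> S"
  shows "inverse z \<in> S"
proof -
  obtain m where m: "is_min_poly K z m" using galois_ext_min_poly[OF LK] z S by blast
  then obtain a p where mp: "m = pCons a p" and a: "a \<in> K" and p: "poly_over K p"
    by (metis is_min_poly_def pCons_cases poly_over_pCons)
  show ?thesis
  proof (cases "z = 0")
    case False
    have "a \<noteq> 0"
    proof
      assume "a = 0"
      then have "p \<noteq> 0" "poly p z = 0" "degree p < degree m"
        using m mp False min_poly_degree[OF m] by (auto simp: is_min_poly_def)
      then show False using m p unfolding is_min_poly_def by fastforce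
    qed
    have "z * (- inverse a * poly p z) = 1"
      using m mp \<open>a \<noteq> 0\<close> by (simp add: is_min_poly_def field_simps add_eq_0_iff2)
    then have "inverse z = - inverse a * poly p z" by (rule inverse_unique)
    moreover have "poly p z \<in> S" using poly_over_poly[OF S(1) poly_over_mono[OF p S(2)] z] .
    moreover have "inverse a \<in> S"
      using a S(2) subfield_inverse[OF galois_ext_subfield_base[OF LK]] by auto
    ultimately show ?thesis using S(1) by (simp add: subring_mult subring_uminus)
  qed (simp add: subring_0[OF S(1)])
qed

text \<open>A K-embedding of a subring of L into L is represented by its graph, so that Zorn's lemma
  applies to the inclusion order.\<close>

definition partial_emb :: "complex set \<Rightarrow> complex set \<Rightarrow> (complex \<times> complex) set \<Rightarrow> bool" where
  "partial_emb K L G \<longleftrightarrow> (\<forall>x u v. (x, u) \<in> G \<longrightarrow> (x, v) \<in> G \<longrightarrow> u = v) \<and> (\<forall>k\<in>K. (k, k) \<in> G) \<and>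
     G \<subseteq> L \<times> L \<and>
     (\<forall>x u y v. (x, u) \<in> G \<longrightarrow> (y, v) \<in> G \<longrightarrow>
        (x + y, u + v) \<in> G \<and> (x * y, u * v) \<in> G \<and> (- x, - u) \<in> G)"

definition graph_fun :: "(complex \<times> complex) set \<Rightarrow> complex \<Rightarrow> complex" where
  "graph_fun G x = (THE u. (x, u) \<in> G)"

context
  fixes K L G
  assumes G: "partial_emb K L G"
begin

lemma partial_emb_unique: "(x, u) \<in> G \<Longrightarrow> (x, v) \<in> G \<Longrightarrow> u = v"
  and partial_emb_base: "k \<in> K \<Longrightarrow> (k, k) \<in> G"
  and partial_emb_subset: "G \<subseteq> L \<times> L"
  and partial_emb_closed: "(x, u) \<in> G \<Longrightarrow> (y, v) \<in> G \<Longrightarrow>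
    (x + y, u + v) \<in> G \<and> (x * y, u * v) \<in> G \<and> (- x, - u) \<in> G"
  using G unfolding partial_emb_def by blast+

lemma graph_fun_eq: "(x, u) \<in> G \<Longrightarrow> graph_fun G x = u"
  unfolding graph_fun_def using partial_emb_unique by blast

lemma graph_fun_in_graph: "x \<in> Domain G \<Longrightarrow> (x, graph_fun G x) \<in> G"
  using graph_fun_eq by blast

lemma graph_fun_base: "k \<in> K \<Longrightarrow> graph_fun G k = k"
  using graph_fun_eq partial_emb_base by blast

lemma graph_fun_in_L: "x \<in> Domain G \<Longrightarrow> graph_fun G x \<in> L"
  using graph_fun_in_graph partial_emb_subset by blast

lemma partial_emb_Domain: "K \<subseteq> Domain G" "Domain G \<subseteq> L"
  using partial_emb_base partial_emb_subset by blast+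

lemma partial_emb_subring_hom:
  assumes K: "is_subfield K"
  shows "subring_hom (Domain G) (graph_fun G)"
proof
  have "0 \<in> K" "1 \<in> K" using K by (simp_all add: is_subfield_def)
  then show "graph_fun G 0 = 0" "graph_fun G 1 = 1" by (simp_all add: graph_fun_base)
  have closed: "x + y \<in> Domain G \<and> x * y \<in> Domain G \<and> - x \<in> Domain G"
    if "x \<in> Domain G" "y \<in> Domain G" for x y
    using partial_emb_closed[OF graph_fun_in_graph[OF that(1)] graph_fun_in_graph[OF that(2)]]
    by blast
  show "is_subring (Domain G)"
    unfolding is_subring_def using \<open>0 \<in> K\<close> \<open>1 \<in> K\<close> partial_emb_Domain(1) closed by blast
  fix x y assume "x \<in> Domain G" "y \<in> Domain G"
  then have "(x + y, graph_fun G x + graph_fun G y) \<in> G"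
    and "(x * y, graph_fun G x * graph_fun G y) \<in> G"
    using partial_emb_closed[OF graph_fun_in_graph graph_fun_in_graph] by blast+
  then show "graph_fun G (x + y) = graph_fun G x + graph_fun G y"
    and "graph_fun G (x * y) = graph_fun G x * graph_fun G y"
    by (simp_all add: graph_fun_eq)
qed

lemma map_poly_graph_fun_base: "is_subfield K \<Longrightarrow> poly_over K p \<Longrightarrow> map_poly (graph_fun G) p = p"
  by (rule poly_eqI) (simp add: subring_hom.coeff_map_hom[OF partial_emb_subring_hom]
      graph_fun_base poly_over_coeff)

context
  assumes LK: "galois_ext L K"
begin

interpretation subring_hom "Domain G" "graph_fun G"
  by (rule partial_emb_subring_hom[OF galois_ext_subfield_base[OF LK]])

lemma graph_fun_eq_0: "x \<in> Domain G \<Longrightarrow> graph_fun G x = 0 \<Longrightarrow> x = 0"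
  using inverse_in_intermediate_ring[OF LK subring partial_emb_Domain, of x]
    hom_mult[of x "inverse x"]
  by (cases "x = 0") (simp_all add: hom_1)

lemma graph_fun_inj: "inj_on (graph_fun G) (Domain G)"
proof (rule inj_onI)
  fix x y assume "x \<in> Domain G" "y \<in> Domain G" "graph_fun G x = graph_fun G y"
  then have "graph_fun G (x - y) = 0" and "x - y \<in> Domain G"
    by (simp_all add: hom_diff subring_diff[OF subring])
  then have "x - y = 0" using graph_fun_eq_0 by blast
  then show "x = y" by simp
qed

end

end

definition adjoin_graph ::
    "(complex \<times> complex) set \<Rightarrow> complex \<Rightarrow> complex \<Rightarrow> (complex \<times> complex) set" where
  "adjoin_graph G \<gamma> \<delta> =
    {(poly p \<gamma>, poly (map_poly (graph_fun G) p) \<delta>) | p. poly_over (Domain G) p}"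

lemma adjoin_graphI: "poly_over (Domain G) p \<Longrightarrow>
    (poly p \<gamma>, poly (map_poly (graph_fun G) p) \<delta>) \<in> adjoin_graph G \<gamma> \<delta>"
  unfolding adjoin_graph_def by blast

lemma adjoin_graphE:
  assumes "(x, u) \<in> adjoin_graph G \<gamma> \<delta>"
  obtains p where "poly_over (Domain G) p" "x = poly p \<gamma>" "u = poly (map_poly (graph_fun G) p) \<delta>"
  using assms unfolding adjoin_graph_def by blast

lemma partial_emb_adjoin_graph:
  assumes LK: "galois_ext L K" and G: "partial_emb K L G" and m: "is_min_poly (Domain G) \<gamma> m"
    and \<gamma>: "\<gamma> \<in> L" and \<delta>: "\<delta> \<in> L" and root: "poly (map_poly (graph_fun G) m) \<delta> = 0"
  shows "partial_emb K L (adjoin_graph G \<gamma> \<delta>)"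
proof -
  interpret subring_hom "Domain G" "graph_fun G"
    by (rule partial_emb_subring_hom[OF G galois_ext_subfield_base[OF LK]])
  let ?G' = "adjoin_graph G \<gamma> \<delta>"
  show ?thesis unfolding partial_emb_def
  proof (intro conjI allI impI ballI subrelI)
    fix x u v assume "(x, u) \<in> ?G'" "(x, v) \<in> ?G'"
    then obtain p p' where p: "poly_over (Domain G) p" "x = poly p \<gamma>"
        "u = poly (map_poly (graph_fun G) p) \<delta>"
      and p': "poly_over (Domain G) p'" "x = poly p' \<gamma>" "v = poly (map_poly (graph_fun G) p') \<delta>"
      by (elim adjoin_graphE)
    have "poly (map_poly (graph_fun G) (p - p')) \<delta> = 0"
      using min_poly_root_transfer[OF graph_fun_eq_0[OF G LK] m root]
        poly_over_diff[OF subring p(1) p'(1)] p p' by simp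
    then show "u = v" using p p' by (simp add: map_poly_hom_diff)
  next
    fix k assume "k \<in> K"
    then show "(k, k) \<in> ?G'"
      using adjoin_graphI[OF poly_over_const[OF subring]] partial_emb_Domain(1)[OF G]
        graph_fun_base[OF G]
      by (force simp: map_poly_hom_const)
  next
    fix x u assume "(x, u) \<in> ?G'"
    then obtain p where p: "poly_over (Domain G) p" "x = poly p \<gamma>"
        "u = poly (map_poly (graph_fun G) p) \<delta>"
      by (elim adjoin_graphE)
    have "poly_over L p" using poly_over_mono[OF p(1) partial_emb_Domain(2)[OF G]] .
    moreover have "poly_over L (map_poly (graph_fun G) p)"
      using p(1) graph_fun_in_L[OF G] by (simp add: poly_over_def coeff_map_hom)
    ultimately show "(x, u) \<in> L \<times> L"
      using p(2,3) poly_over_poly[OF subfield_is_subring[OF galois_ext_subfield[OF LK]]] \<gamma> \<delta>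
      by auto
  next
    fix x u y v assume "(x, u) \<in> ?G'" "(y, v) \<in> ?G'"
    then obtain p p' where p: "poly_over (Domain G) p" "x = poly p \<gamma>"
        "u = poly (map_poly (graph_fun G) p) \<delta>"
      and p': "poly_over (Domain G) p'" "y = poly p' \<gamma>" "v = poly (map_poly (graph_fun G) p') \<delta>"
      by (elim adjoin_graphE)
    show "(x + y, u + v) \<in> ?G'"
      using adjoin_graphI[OF poly_over_add[OF subring p(1) p'(1)]] p p'
      by (simp add: map_poly_hom_add)
    show "(x * y, u * v) \<in> ?G'"
      using adjoin_graphI[OF poly_over_mult[OF subring p(1) p'(1)]] p p'
      by (simp add: map_poly_hom_mult)
    show "(- x, - u) \<in> ?G'"
      using adjoin_graphI[OF poly_over_uminus[OF subring p(1)]] p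
      by (simp add: map_poly_hom_uminus)
  qed
qed

lemma partial_emb_extend:
  assumes LK: "galois_ext L K" and G: "partial_emb K L G" and m: "is_min_poly (Domain G) \<gamma> m"
    and \<gamma>: "\<gamma> \<in> L" and \<delta>: "\<delta> \<in> L" and root: "poly (map_poly (graph_fun G) m) \<delta> = 0"
  obtains G' where "partial_emb K L G'" "G \<subseteq> G'" "(\<gamma>, \<delta>) \<in> G'"
proof -
  interpret subring_hom "Domain G" "graph_fun G"
    by (rule partial_emb_subring_hom[OF G galois_ext_subfield_base[OF LK]])
  have "G \<subseteq> adjoin_graph G \<gamma> \<delta>"
  proof (rule subrelI)
    fix x u assume "(x, u) \<in> G"
    then have "x \<in> Domain G" "u = graph_fun G x" using graph_fun_eq[OF G] by auto
    then show "(x, u) \<in> adjoin_graph G \<gamma> \<delta>"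
      using adjoin_graphI[OF poly_over_const[OF subring]] by (simp add: map_poly_hom_const)
  qed
  moreover have "(\<gamma>, \<delta>) \<in> adjoin_graph G \<gamma> \<delta>"
    using adjoin_graphI[OF poly_over_X[OF subring]] by (simp add: map_poly_pCons hom_0 hom_1)
  ultimately show ?thesis using that partial_emb_adjoin_graph[OF assms] by blast
qed

lemma conjugate_root_in_L:
  assumes LK: "galois_ext L K" and G: "partial_emb K L G" and m: "is_min_poly (Domain G) \<gamma> m"
    and \<gamma>: "\<gamma> \<in> L"
  obtains \<delta> where "\<delta> \<in> L" "poly (map_poly (graph_fun G) m) \<delta> = 0"
proof -
  have K: "is_subfield K" using galois_ext_subfield_base[OF LK] .
  interpret subring_hom "Domain G" "graph_fun G" by (rule partial_emb_subring_hom[OF G K])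
  have "degree (map_poly (graph_fun G) m) = degree m"
    using degree_map_poly_hom[OF graph_fun_eq_0[OF G LK]] m by (simp add: is_min_poly_def)
  then have "\<not> constant (poly (map_poly (graph_fun G) m))"
    using min_poly_degree[OF m] by (simp add: constant_degree)
  then obtain \<delta> where \<delta>: "poly (map_poly (graph_fun G) m) \<delta> = 0"
    using fundamental_theorem_of_algebra by blast
  obtain M where M: "is_min_poly K \<gamma> M" using galois_ext_min_poly[OF LK \<gamma>] by blast
  have MK: "poly_over K M" "M \<noteq> 0" "poly M \<gamma> = 0" using M by (auto simp: is_min_poly_def)
  \<comment> \<open>\<delta> is a root of the minimal polynomial of \<gamma> over K, which splits in L by normality\<close>
  have "poly (map_poly (graph_fun G) M) \<delta> = 0"
    using min_poly_root_transfer[OF graph_fun_eq_0[OF G LK] m \<delta>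
        poly_over_mono[OF MK(1) partial_emb_Domain(1)[OF G]] MK(3)] .
  then have "poly M \<delta> = 0" using map_poly_graph_fun_base[OF G K MK(1)] by simp
  moreover have "splits_in L M" using galois_ext_normal[OF LK min_poly_irreducible[OF M] \<gamma> MK(3)] .
  ultimately have "\<delta> \<in> L" using root_of_split_poly MK(2) by blast
  then show ?thesis using that \<delta> by blast
qed

lemma partial_emb_Union_chain:
  assumes C: "C \<noteq> {}" "\<And>X. X \<in> C \<Longrightarrow> partial_emb K L X" "\<And>X Y. X \<in> C \<Longrightarrow> Y \<in> C \<Longrightarrow> X \<subseteq> Y \<or> Y \<subseteq> X"
  shows "partial_emb K L (\<Union>C)"
  unfolding partial_emb_def
proof (intro conjI allI impI ballI subsetI)
  fix x u v assume "(x, u) \<in> \<Union>C" "(x, v) \<in> \<Union>C"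
  then obtain X Y where "X \<in> C" "Y \<in> C" "(x, u) \<in> X" "(x, v) \<in> Y" by blast
  then show "u = v" using C(2) C(3)[of X Y] partial_emb_unique by blast
next
  fix k assume "k \<in> K" then show "(k, k) \<in> \<Union>C" using C(1,2) partial_emb_base by blast
next
  fix z assume "z \<in> \<Union>C" then show "z \<in> L \<times> L" using C(2) partial_emb_subset by blast
next
  fix x u y v assume "(x, u) \<in> \<Union>C" "(y, v) \<in> \<Union>C"
  then obtain X Y where XY: "X \<in> C" "Y \<in> C" "(x, u) \<in> X" "(y, v) \<in> Y" by blast
  then obtain Z where "Z \<in> C" "(x, u) \<in> Z" "(y, v) \<in> Z" using C(3)[OF XY(1,2)] by blast
  then show "(x + y, u + v) \<in> \<Union>C" "(x * y, u * v) \<in> \<Union>C" "(- x, - u) \<in> \<Union>C"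
    using partial_emb_closed[OF C(2)] by blast+
qed

lemma partial_emb_total_extension:
  assumes LK: "galois_ext L K" and G0: "partial_emb K L G0"
  obtains M where "partial_emb K L M" "G0 \<subseteq> M" "Domain M = L"
proof -
  define A where "A = {G. partial_emb K L G \<and> G0 \<subseteq> G}"
  have "\<exists>M\<in>A. \<forall>X\<in>A. M \<subseteq> X \<longrightarrow> X = M"
  proof (rule Zorn_Lemma2, intro ballI)
    fix C assume "C \<in> chains A"
    then have CA: "\<And>X. X \<in> C \<Longrightarrow> partial_emb K L X \<and> G0 \<subseteq> X"
      and ch: "\<And>X Y. X \<in> C \<Longrightarrow> Y \<in> C \<Longrightarrow> X \<subseteq> Y \<or> Y \<subseteq> X"
      unfolding chains_def chain_subset_def A_def by blast+
    show "\<exists>U\<in>A. \<forall>X\<in>C. X \<subseteq> U"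
    proof (cases "C = {}")
      case True
      then show ?thesis using G0 unfolding A_def by blast
    next
      case False
      have "partial_emb K L (\<Union>C)" using partial_emb_Union_chain[OF False _ ch] CA by blast
      moreover have "G0 \<subseteq> \<Union>C" using False CA by blast
      ultimately show ?thesis unfolding A_def by blast
    qed
  qed
  then obtain M where M: "partial_emb K L M" "G0 \<subseteq> M"
    and max: "\<forall>X. partial_emb K L X \<and> G0 \<subseteq> X \<longrightarrow> M \<subseteq> X \<longrightarrow> X = M"
    unfolding A_def by auto
  have "Domain M = L"
  proof (rule ccontr)
    assume "Domain M \<noteq> L"
    then obtain \<gamma> where \<gamma>: "\<gamma> \<in> L" "\<gamma> \<notin> Domain M" using partial_emb_Domain(2)[OF M(1)] by blast
    obtain m where m: "is_min_poly (Domain M) \<gamma> m"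
      using galois_ext_min_poly[OF LK \<gamma>(1) partial_emb_Domain(1)[OF M(1)]] by blast
    obtain \<delta> where "\<delta> \<in> L" "poly (map_poly (graph_fun M) m) \<delta> = 0"
      using conjugate_root_in_L[OF LK M(1) m \<gamma>(1)] by blast
    then obtain G' where G': "partial_emb K L G'" "M \<subseteq> G'" "(\<gamma>, \<delta>) \<in> G'"
      using partial_emb_extend[OF LK M(1) m \<gamma>(1)] by blast
    then have "G' = M" using max M(2) by blast
    then show False using G'(3) \<gamma>(2) by blast
  qed
  then show ?thesis using that M by blast
qed

lemma total_partial_emb_in_Gal:
  assumes LK: "galois_ext L K" and M: "partial_emb K L M" and D: "Domain M = L"
  shows "graph_fun M \<in> Gal L K"
proof -
  have K: "is_subfield K" using galois_ext_subfield_base[OF LK] .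
  interpret subring_hom "Domain M" "graph_fun M" by (rule partial_emb_subring_hom[OF M K])
  have inj: "inj_on (graph_fun M) L" using graph_fun_inj[OF M LK] D by simp
  have into: "graph_fun M ` L \<subseteq> L" using graph_fun_in_L[OF M] D by blast
  \<comment> \<open>graph_fun M maps the finitely many roots in L of a polynomial over K injectively into
    themselves, hence onto themselves\<close>
  have onto: "L \<subseteq> graph_fun M ` L"
  proof
    fix y assume y: "y \<in> L"
    obtain p where p: "is_min_poly K y p" using galois_ext_min_poly[OF LK y] by blast
    define R where "R = {r. poly p r = 0} \<inter> L"
    have "p \<noteq> 0" using p by (simp add: is_min_poly_def)
    then have fin: "finite R" unfolding R_def using poly_roots_finite by blast
    have pM: "poly_over (Domain M) p"
      using p poly_over_mono partial_emb_Domain(1)[OF M] unfolding is_min_poly_def by blast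
    have p_fixed: "map_poly (graph_fun M) p = p"
      using map_poly_graph_fun_base[OF M K] p by (simp add: is_min_poly_def)
    have "graph_fun M r \<in> R" if r: "r \<in> R" for r
    proof -
      have rM: "r \<in> Domain M" using r D by (simp add: R_def)
      have "poly p (graph_fun M r) = graph_fun M (poly p r)"
        using poly_map_poly_hom[OF pM rM] p_fixed by simp
      also have "\<dots> = 0" using r hom_0 by (simp add: R_def)
      finally show ?thesis using r into unfolding R_def by auto
    qed
    then have "graph_fun M ` R = R"
      using endo_inj_surj[OF fin _ inj_on_subset[OF inj]] R_def by blast
    moreover have "y \<in> R" using y p unfolding R_def is_min_poly_def by blast
    ultimately show "y \<in> graph_fun M ` L" unfolding R_def by blast
  qed
  show ?thesis
    unfolding Gal_def bij_betw_def
    using inj into onto hom_add hom_mult D graph_fun_base[OF M] by auto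
qed

lemma partial_emb_identity:
  assumes "is_subfield K" "K \<subseteq> L"
  shows "partial_emb K L {(k, k) | k. k \<in> K}"
  using assms subfield_is_subring[OF assms(1)]
  by (auto simp: partial_emb_def intro: subring_add subring_mult subring_uminus)

lemma min_poly_other_root:
  assumes LK: "galois_ext L K" and m: "is_min_poly K \<alpha> m" and \<alpha>: "\<alpha> \<in> L" "\<alpha> \<notin> K"
  shows "\<exists>\<beta>\<in>L. poly m \<beta> = 0 \<and> \<beta> \<noteq> \<alpha>"
proof (rule ccontr)
  assume no: "\<not> ?thesis"
  have K: "is_subfield K" using galois_ext_subfield_base[OF LK] .
  have "splits_in L m"
    using galois_ext_normal[OF LK min_poly_irreducible[OF m] \<alpha>(1)] m by (simp add: is_min_poly_def)
  then obtain c rs where rs: "set rs \<subseteq> L"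
      "m = Polynomial.smult c (prod_list (map (\<lambda>r. [:- r, 1:]) rs))"
    unfolding splits_in_def by blast
  have "c \<noteq> 0" using rs m by (auto simp: is_min_poly_def)
  have "r = \<alpha>" if "r \<in> set rs" for r
  proof -
    have "poly (prod_list (map (\<lambda>r. [:- r, 1:]) rs)) r = 0" using that by (induction rs) auto
    then show ?thesis using no rs that by auto
  qed
  then have "map (\<lambda>r. [:- r, 1:]) rs = replicate (length rs) [:- \<alpha>, 1:]" by (induction rs) auto
  then have m_eq: "m = Polynomial.smult c ([:- \<alpha>, 1:] ^ length rs)"
    using rs(2) by simp
  \<comment> \<open>\<alpha> is then a multiple root, which a minimal polynomial cannot have in characteristic 0\<close>
  have "degree m = length rs" using m_eq \<open>c \<noteq> 0\<close> by (simp add: degree_linear_power)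
  moreover have "degree m \<noteq> 1" using min_poly_degree_one[OF K m] \<alpha>(2) by blast
  ultimately obtain j where "length rs = Suc (Suc j)" using min_poly_degree[OF m]
    by (metis One_nat_def Suc_le_D not0_implies_Suc)
  then have "pderiv m = Polynomial.smult c (Polynomial.smult (of_nat (Suc (Suc j)))
      ([:- \<alpha>, 1:] ^ Suc j) * pderiv [:- \<alpha>, 1:])"
    using m_eq by (simp only: pderiv_smult pderiv_power_Suc)
  then have "poly (pderiv m) \<alpha> = 0" by simp
  then show False using min_poly_root_simple[OF subfield_is_subring[OF K] m] by blast
qed

theorem Gal_fixed_imp_base:
  assumes LK: "galois_ext L K" and \<alpha>: "\<alpha> \<in> L" and fixed: "\<forall>\<sigma>\<in>Gal L K. \<sigma> \<alpha> = \<alpha>"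
  shows "\<alpha> \<in> K"
proof (rule ccontr)
  assume "\<alpha> \<notin> K"
  have K: "is_subfield K" using galois_ext_subfield_base[OF LK] .
  let ?G = "{(k, k) | k. k \<in> K}"
  have G: "partial_emb K L ?G" using partial_emb_identity[OF K galois_ext_subset[OF LK]] .
  obtain m where m: "is_min_poly K \<alpha> m" using galois_ext_min_poly[OF LK \<alpha>] by blast
  obtain \<beta> where \<beta>: "\<beta> \<in> L" "poly m \<beta> = 0" "\<beta> \<noteq> \<alpha>"
    using min_poly_other_root[OF LK m \<alpha> \<open>\<alpha> \<notin> K\<close>] by blast
  have "Domain ?G = K" by auto
  then have m': "is_min_poly (Domain ?G) \<alpha> m" using m by simp
  have "map_poly (graph_fun ?G) m = m"
    using map_poly_graph_fun_base[OF G K] m by (simp add: is_min_poly_def)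
  then have "poly (map_poly (graph_fun ?G) m) \<beta> = 0" using \<beta>(2) by simp
  then obtain G0 where G0: "partial_emb K L G0" "(\<alpha>, \<beta>) \<in> G0"
    using partial_emb_extend[OF LK G m' \<alpha> \<beta>(1)] by blast
  obtain M where M: "partial_emb K L M" "G0 \<subseteq> M" "Domain M = L"
    using partial_emb_total_extension[OF LK G0(1)] by blast
  have "graph_fun M \<in> Gal L K" using total_partial_emb_in_Gal[OF LK M(1,3)] .
  moreover have "graph_fun M \<alpha> = \<beta>" using graph_fun_eq[OF M(1)] G0(2) M(2) by blast
  ultimately show False using fixed \<beta>(3) by auto
qed

section \<open>Units modulo an odd prime power\<close>

lemma cong_pow_gcd_totient:
  fixes c q N :: nat
  assumes "coprime c q" "[c ^ N = 1] (mod q)"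
  shows "[c ^ gcd (totient q) N = 1] (mod q)"
proof -
  have "ord q c dvd totient q" using euler_theorem[OF assms(1)] ord_divides by blast
  moreover have "ord q c dvd N" using assms(2) ord_divides by blast
  ultimately have "ord q c dvd gcd (totient q) N" by (rule gcd_greatest)
  then show ?thesis using ord_divides by blast
qed

lemma cong_square_one_odd_prime_power:
  fixes c p k :: nat
  assumes p: "prime p" "odd p" and sq: "[c ^ 2 = 1] (mod p ^ k)"
  shows "[c = 1] (mod p ^ k) \<or> [c + 1 = 0] (mod p ^ k)"
proof -
  have dvd: "int p ^ k dvd (int c - 1) * (int c + 1)"
    using sq unfolding cong_int_iff[symmetric] cong_iff_dvd_diff
    by (simp add: power2_eq_square algebra_simps)
  have not_both: "\<not> int p dvd int c - 1 \<or> \<not> int p dvd int c + 1"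
  proof (rule ccontr)
    assume "\<not> ?thesis"
    then have "int p dvd 2" using dvd_diff[of "int p" "int c + 1" "int c - 1"] by simp
    then have "p dvd 2" using int_dvd_int_iff[of p 2] by simp
    then have "p \<le> 2" by (simp add: dvd_imp_le)
    then have "p = 2" using prime_ge_2_nat[OF p(1)] by simp
    then show False using p(2) by simp
  qed
  have "prime (int p)" using p(1) by simp
  \<comment> \<open>p divides at most one of the factors, so p^k divides the other one\<close>
  have "int p ^ k dvd int c - 1 \<or> int p ^ k dvd int c + 1"
  proof (cases "int p dvd int c + 1")
    case True
    then have "coprime (int p ^ k) (int c - 1)"
      using not_both prime_imp_coprime[OF \<open>prime (int p)\<close>] by simp
    then show ?thesis using dvd coprime_dvd_mult_right_iff by blast
  next
    case False
    then have "coprime (int p ^ k) (int c + 1)" using prime_imp_coprime[OF \<open>prime (int p)\<close>] by simp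
    then show ?thesis using dvd coprime_dvd_mult_left_iff by blast
  qed
  then show ?thesis
    unfolding cong_int_iff[symmetric] cong_iff_dvd_diff by (auto simp: add.commute)
qed

section \<open>Endomorphisms of a cyclic group\<close>

lemma mod_double_eq_self:
  fixes j q :: nat
  assumes "j < q" "(j + j) mod q = j"
  shows "j = 0"
proof (cases "j + j < q")
  case False
  then have "(j + j) mod q = j + j - q" using assms(1) by (simp add: mod_if)
  then show ?thesis using assms by simp
qed (use assms in simp)

locale cyclic_enum =
  fixes add :: "'a \<Rightarrow> 'a \<Rightarrow> 'a" and S :: "'a set" and q :: nat and f :: "nat \<Rightarrow> 'a"
  assumes order_gt_1: "1 < q" and bij: "bij_betw f {0..<q} S"
    and enum_add: "\<And>i j. i < q \<Longrightarrow> j < q \<Longrightarrow> f ((i + j) mod q) = add (f i) (f j)"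
begin

lemma enum_in: "i < q \<Longrightarrow> f i \<in> S"
  using bij by (auto simp: bij_betw_def)

lemma enum_eq_iff: "i < q \<Longrightarrow> j < q \<Longrightarrow> f i = f j \<longleftrightarrow> i = j"
  using bij by (auto simp: bij_betw_def inj_on_def)

lemma enum_cases:
  assumes "P \<in> S"
  obtains i where "i < q" "P = f i"
  using assms bij by (auto simp: bij_betw_def)

lemma enum_zero:
  assumes "e \<in> S" "add e e = e"
  shows "f 0 = e"
proof -
  obtain j where j: "j < q" "e = f j" using enum_cases assms(1) by blast
  then have "f ((j + j) mod q) = f j" using enum_add[OF j(1) j(1)] assms(2) by simp
  then have "(j + j) mod q = j" using j(1) enum_eq_iff order_gt_1 by simp
  then have "j = 0" by (rule mod_double_eq_self[OF j(1)])
  then show ?thesis using j(2) by simp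
qed

lemma endo_is_mult:
  assumes hS: "\<And>P. P \<in> S \<Longrightarrow> h P \<in> S"
    and hadd: "\<And>P Q. P \<in> S \<Longrightarrow> Q \<in> S \<Longrightarrow> h (add P Q) = add (h P) (h Q)"
  obtains c where "\<And>i. i < q \<Longrightarrow> h (f i) = f (c * i mod q)"
proof -
  obtain c where c: "c < q" "h (f 1) = f c"
    using enum_cases[OF hS[OF enum_in[OF order_gt_1]]] by blast
  have "h (f i) = f (c * i mod q)" if "i < q" for i
    using that
  proof (induction i)
    case 0
    have "add (f 0) (f 0) = f 0" using enum_add[of 0 0] order_gt_1 by simp
    then have "add (h (f 0)) (h (f 0)) = h (f 0)"
      using hadd[OF enum_in enum_in, of 0 0] order_gt_1 by simp
    then have "f 0 = h (f 0)" using enum_zero[OF hS[OF enum_in[of 0]]] order_gt_1 by simp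
    then show ?case by simp
  next
    case (Suc i)
    then have i: "i < q" by simp
    have "h (f (Suc i)) = h (add (f i) (f 1))" using enum_add[OF i order_gt_1] Suc.prems by simp
    also have "\<dots> = add (h (f i)) (h (f 1))" using hadd[OF enum_in[OF i] enum_in[OF order_gt_1]] .
    also have "\<dots> = add (f (c * i mod q)) (f c)" using Suc.IH[OF i] c(2) by simp
    also have "\<dots> = f ((c * i mod q + c) mod q)"
      using enum_add[of "c * i mod q" c] c(1) order_gt_1 by simp
    also have "\<dots> = f (c * Suc i mod q)" by (simp add: mod_add_left_eq mod_add_right_eq add.commute)
    finally show ?case .
  qed
  then show ?thesis using that by blast
qed

context
  fixes h c
  assumes mult: "\<And>i. i < q \<Longrightarrow> h (f i) = f (c * i mod q)"
begin

lemma mult_coprime: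
  assumes "f 1 \<in> h ` S"
  shows "coprime c q"
proof -
  obtain P where P: "P \<in> S" "f 1 = h P" using assms by blast
  obtain i where i: "i < q" "P = f i" using enum_cases[OF P(1)] by blast
  have "f (c * i mod q) = f 1" using mult[OF i(1)] P(2) i(2) by simp
  then have ci: "c * i mod q = 1" using enum_eq_iff[of "c * i mod q" 1] order_gt_1 by simp
  show ?thesis
  proof (rule coprimeI)
    fix d assume "d dvd c" "d dvd q"
    then have "d dvd c * i mod q" by (simp add: dvd_mod)
    then show "is_unit d" using ci by simp
  qed
qed

lemma mult_iterate: "i < q \<Longrightarrow> (h ^^ n) (f i) = f (c ^ n * i mod q)"
proof (induction n)
  case (Suc n)
  then have "(h ^^ Suc n) (f i) = f (c * (c ^ n * i mod q) mod q)" using mult order_gt_1 by simp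
  also have "\<dots> = f (c ^ Suc n * i mod q)" by (simp add: mod_mult_right_eq mult.assoc)
  finally show ?case .
qed simp

lemma mult_order: "(h ^^ n) (f 1) = f 1 \<Longrightarrow> [c ^ n = 1] (mod q)"
  using mult_iterate[of 1 n] order_gt_1 enum_eq_iff by (simp add: cong_def)

lemma mult_cong_one:
  assumes "[c = 1] (mod q)" "P \<in> S"
  shows "h P = P"
proof -
  obtain i where i: "i < q" "P = f i" using enum_cases assms(2) by blast
  have "c * i mod q = (c mod q) * i mod q" by (simp add: mod_mult_left_eq)
  also have "\<dots> = i" using assms(1) i(1) order_gt_1 by (simp add: cong_def)
  finally show ?thesis using i mult by simp
qed

lemma mult_cong_minus_one:
  assumes "[c + 1 = 0] (mod q)" "P \<in> S"
  shows "add P (h P) = f 0"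
proof -
  obtain i where i: "i < q" "P = f i" using enum_cases assms(2) by blast
  have "add P (h P) = f ((i + c * i mod q) mod q)"
    using i mult[OF i(1)] enum_add[OF i(1), of "c * i mod q"] order_gt_1 by simp
  also have "(i + c * i mod q) mod q = (c + 1) * i mod q"
    by (simp add: mod_add_right_eq algebra_simps)
  also have "\<dots> = ((c + 1) mod q) * i mod q" by (simp add: mod_mult_left_eq)
  also have "\<dots> = 0" using assms(1) by (simp add: cong_def)
  finally show ?thesis .
qed

end

end

definition ecpt_in :: "complex set \<Rightarrow> ecpt \<Rightarrow> bool" where
  "ecpt_in F P \<longleftrightarrow> (case P of Inf \<Rightarrow> True | Aff x y \<Rightarrow> x \<in> F \<and> y \<in> F)"

definition ecpt_map :: "(complex \<Rightarrow> complex) \<Rightarrow> ecpt \<Rightarrow> ecpt" where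
  "ecpt_map \<sigma> P = (case P of Inf \<Rightarrow> Inf | Aff x y \<Rightarrow> Aff (\<sigma> x) (\<sigma> y))"

definition ecpt_neg :: "ecpt \<Rightarrow> ecpt" where
  "ecpt_neg P = (case P of Inf \<Rightarrow> Inf | Aff x y \<Rightarrow> Aff x (- y))"

lemma ecpt_in_simps [simp]: "ecpt_in F Inf" "ecpt_in F (Aff x y) \<longleftrightarrow> x \<in> F \<and> y \<in> F"
  by (simp_all add: ecpt_in_def)

lemma ecpt_map_simps [simp]: "ecpt_map \<sigma> Inf = Inf" "ecpt_map \<sigma> (Aff x y) = Aff (\<sigma> x) (\<sigma> y)"
  by (simp_all add: ecpt_map_def)

lemma ecpt_neg_simps [simp]: "ecpt_neg Inf = Inf" "ecpt_neg (Aff x y) = Aff x (- y)"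
  by (simp_all add: ecpt_neg_def)

lemma ecpt_map_iterate: "(ecpt_map \<sigma> ^^ n) P = ecpt_map (\<sigma> ^^ n) P"
  by (induction n) (cases P; simp)+

lemma ec_points_in: "P \<in> ec_points a b F \<Longrightarrow> ecpt_in F P"
  by (auto simp: ec_points_def)

lemma ec_torsion_mono: "K \<subseteq> L \<Longrightarrow> ec_torsion a b K q \<subseteq> ec_torsion a b L q"
  by (auto simp: ec_torsion_def ec_points_def)

lemma ec_torsion_in_subfield:
  "P \<in> ec_torsion a b L q \<Longrightarrow> ecpt_in K P \<Longrightarrow> P \<in> ec_torsion a b K q"
  by (cases P) (auto simp: ec_torsion_def ec_points_def)

lemma ec_smul_0: "ec_smul a b 0 P = Inf"
  and ec_smul_Suc: "ec_smul a b (Suc n) P = ec_add a b P (ec_smul a b n P)"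
  by (simp_all add: ec_smul_def)

lemma ec_smul_Inf: "ec_smul a b n Inf = Inf"
  by (induction n) (simp_all add: ec_smul_0 ec_smul_Suc)

lemma Inf_in_ec_torsion: "Inf \<in> ec_torsion a b F q"
  by (simp add: ec_torsion_def ec_points_def ec_smul_Inf)

definition ec_slope :: "complex \<Rightarrow> complex \<Rightarrow> complex \<Rightarrow> complex \<Rightarrow> complex \<Rightarrow> complex" where
  "ec_slope a x1 y1 x2 y2 =
     (if x1 = x2 then (3 * x1 ^ 2 + a) / (2 * y1) else (y2 - y1) / (x2 - x1))"

lemma ec_add_Aff:
  "ec_add a b (Aff x1 y1) (Aff x2 y2) =
    (if x1 = x2 \<and> y1 = - y2 then Inf
     else let l = ec_slope a x1 y1 x2 y2
          in Aff (l ^ 2 - x1 - x2) (l * (x1 - (l ^ 2 - x1 - x2)) - y1))"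
  by (simp add: ec_slope_def Let_def)

lemma ec_add_eq_Inf_imp_neg: "ec_add a b P R = Inf \<Longrightarrow> R = ecpt_neg P"
  by (cases P; cases R) (auto simp: Let_def split: if_splits)

lemma ec_add_closed:
  assumes F: "is_subfield F" and a: "a \<in> F" and P: "ecpt_in F P" and Q: "ecpt_in F Q"
  shows "ecpt_in F (ec_add a b P Q)"
proof (cases P; cases Q)
  fix x1 y1 x2 y2 assume PQ: "P = Aff x1 y1" "Q = Aff x2 y2"
  have R: "is_subring F" using subfield_is_subring[OF F] .
  have xy: "x1 \<in> F" "y1 \<in> F" "x2 \<in> F" "y2 \<in> F" using P Q PQ by auto
  then have "ec_slope a x1 y1 x2 y2 \<in> F" using a
    by (simp add: ec_slope_def subfield_divide[OF F] subring_add[OF R] subring_diff[OF R]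
        subring_mult[OF R] subring_power[OF R] subring_numeral[OF R])
  then show ?thesis using PQ xy
    by (simp add: ec_add_Aff Let_def subring_add[OF R] subring_diff[OF R] subring_mult[OF R]
        subring_power[OF R] subring_numeral[OF R] del: ec_add.simps)
qed (use P Q in auto)

locale gal_aut =
  fixes L K :: "complex set" and \<sigma> :: "complex \<Rightarrow> complex"
  assumes galois: "galois_ext L K" and in_Gal: "\<sigma> \<in> Gal L K"
begin

lemma L_subfield: "is_subfield L"
  using galois_ext_subfield[OF galois] .

lemma base_subset: "K \<subseteq> L"
  using galois_ext_subset[OF galois] .

lemma L_closed [simp]:
  "0 \<in> L" "1 \<in> L" "numeral n \<in> L"
  "x \<in> L \<Longrightarrow> y \<in> L \<Longrightarrow> x + y \<in> L"
  "x \<in> L \<Longrightarrow> y \<in> L \<Longrightarrow> x * y \<in> L"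
  "x \<in> L \<Longrightarrow> y \<in> L \<Longrightarrow> x - y \<in> L"
  "x \<in> L \<Longrightarrow> y \<in> L \<Longrightarrow> x / y \<in> L"
  "x \<in> L \<Longrightarrow> - x \<in> L"
  "x \<in> L \<Longrightarrow> x ^ m \<in> L"
  using subfield_is_subring[OF L_subfield] subfield_divide[OF L_subfield]
  by (auto intro: subring_0 subring_1 subring_numeral subring_add subring_mult subring_diff
      subring_uminus subring_power)

lemma aut_in [simp]: "x \<in> L \<Longrightarrow> \<sigma> x \<in> L"
  and aut_inj: "x \<in> L \<Longrightarrow> y \<in> L \<Longrightarrow> \<sigma> x = \<sigma> y \<longleftrightarrow> x = y"
  and aut_add [simp]: "x \<in> L \<Longrightarrow> y \<in> L \<Longrightarrow> \<sigma> (x + y) = \<sigma> x + \<sigma> y"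
  and aut_mult [simp]: "x \<in> L \<Longrightarrow> y \<in> L \<Longrightarrow> \<sigma> (x * y) = \<sigma> x * \<sigma> y"
  and aut_base: "x \<in> K \<Longrightarrow> \<sigma> x = x"
  using in_Gal unfolding Gal_def bij_betw_def inj_on_def by blast+

lemma aut_numeral [simp]: "\<sigma> (numeral n) = numeral n" and aut_0 [simp]: "\<sigma> 0 = 0"
  using aut_base subring_numeral subring_0
    subfield_is_subring[OF galois_ext_subfield_base[OF galois]]
  by blast+

lemma aut_uminus [simp]: "x \<in> L \<Longrightarrow> \<sigma> (- x) = - \<sigma> x"
  using aut_add[of x "- x"] by (simp add: eq_neg_iff_add_eq_0 add.commute)

lemma aut_diff [simp]: "x \<in> L \<Longrightarrow> y \<in> L \<Longrightarrow> \<sigma> (x - y) = \<sigma> x - \<sigma> y"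
  using aut_add[of x "- y"] by simp

lemma aut_divide [simp]: "x \<in> L \<Longrightarrow> y \<in> L \<Longrightarrow> \<sigma> (x / y) = \<sigma> x / \<sigma> y"
proof (cases "y = 0")
  case False
  assume "x \<in> L" "y \<in> L"
  then have "\<sigma> (x / y) * \<sigma> y = \<sigma> x" using False aut_mult[of "x / y" y] by simp
  moreover have "\<sigma> y \<noteq> 0" using aut_inj[of y 0] \<open>y \<in> L\<close> False by simp
  ultimately show ?thesis by (simp add: field_simps)
qed simp

lemma aut_power [simp]: "x \<in> L \<Longrightarrow> \<sigma> (x ^ n) = \<sigma> x ^ n"
  by (induction n)
    (simp_all add: aut_base subring_1 subfield_is_subring galois_ext_subfield_base[OF galois])

lemma aut_ec_slope:
  assumes "a \<in> K" "x1 \<in> L" "y1 \<in> L" "x2 \<in> L" "y2 \<in> L"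
  shows "\<sigma> (ec_slope a x1 y1 x2 y2) = ec_slope a (\<sigma> x1) (\<sigma> y1) (\<sigma> x2) (\<sigma> y2)"
  using assms base_subset aut_base[of a] aut_inj[of x1 x2] by (auto simp: ec_slope_def)

lemma ecpt_map_add:
  assumes a: "a \<in> K" and P: "ecpt_in L P" and Q: "ecpt_in L Q"
  shows "ecpt_map \<sigma> (ec_add a b P Q) = ec_add a b (ecpt_map \<sigma> P) (ecpt_map \<sigma> Q)"
proof (cases P; cases Q)
  fix x1 y1 x2 y2 assume PQ: "P = Aff x1 y1" "Q = Aff x2 y2"
  then have L: "x1 \<in> L" "y1 \<in> L" "x2 \<in> L" "y2 \<in> L" using P Q by auto
  have "a \<in> L" using a base_subset by auto
  then have "ec_slope a x1 y1 x2 y2 \<in> L" using L by (simp add: ec_slope_def)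
  moreover have "\<sigma> x1 = \<sigma> x2 \<longleftrightarrow> x1 = x2" "\<sigma> y1 = - \<sigma> y2 \<longleftrightarrow> y1 = - y2"
    using aut_inj[of x1 x2] aut_inj[of y1 "- y2"] L by simp_all
  ultimately show ?thesis using PQ L aut_ec_slope[OF a L, symmetric]
    by (simp add: ec_add_Aff Let_def del: ec_add.simps)
qed simp_all

lemma ecpt_map_smul:
  assumes a: "a \<in> K" and P: "ecpt_in L P"
  shows "ecpt_map \<sigma> (ec_smul a b n P) = ec_smul a b n (ecpt_map \<sigma> P) \<and> ecpt_in L (ec_smul a b n P)"
proof (induction n)
  case (Suc n)
  have "a \<in> L" using a base_subset by auto
  then show ?case
    using Suc ecpt_map_add[OF a P] ec_add_closed[OF L_subfield _ P] by (simp add: ec_smul_Suc)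
qed (simp add: ec_smul_0)

lemma ecpt_map_points:
  assumes a: "a \<in> K" and b: "b \<in> K" and P: "P \<in> ec_points a b L"
  shows "ecpt_map \<sigma> P \<in> ec_points a b L"
proof (cases P)
  case (Aff x y)
  then have L: "x \<in> L" "y \<in> L" and eq: "y ^ 2 = x ^ 3 + a * x + b"
    using P by (auto simp: ec_points_def)
  have "a \<in> L" "b \<in> L" "\<sigma> a = a" "\<sigma> b = b" using a b base_subset aut_base by auto
  then have "\<sigma> y ^ 2 = \<sigma> x ^ 3 + a * \<sigma> x + b" using arg_cong[OF eq, of \<sigma>] L by simp
  then show ?thesis using Aff L by (simp add: ec_points_def)
qed (simp add: ec_points_def)

lemma ecpt_map_torsion:
  assumes a: "a \<in> K" and b: "b \<in> K" and P: "P \<in> ec_torsion a b L q"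
  shows "ecpt_map \<sigma> P \<in> ec_torsion a b L q"
proof -
  have P': "P \<in> ec_points a b L" "ec_smul a b q P = Inf" using P by (auto simp: ec_torsion_def)
  have "ec_smul a b q (ecpt_map \<sigma> P) = ecpt_map \<sigma> (ec_smul a b q P)"
    using ecpt_map_smul[OF a ec_points_in[OF P'(1)], of b q] by simp
  then have "ec_smul a b q (ecpt_map \<sigma> P) = Inf" using P'(2) by simp
  then show ?thesis using ecpt_map_points[OF a b P'(1)] by (simp add: ec_torsion_def)
qed

lemma ecpt_map_inj: "inj_on (ecpt_map \<sigma>) {P. ecpt_in L P}"
proof (rule inj_onI)
  fix P Q assume "P \<in> {P. ecpt_in L P}" "Q \<in> {P. ecpt_in L P}" "ecpt_map \<sigma> P = ecpt_map \<sigma> Q"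
  then show "P = Q" by (cases P; cases Q) (auto simp: aut_inj)
qed

end

lemma aut_ord_works:
  assumes "has_finite_order L \<sigma>"
  shows "0 < aut_ord L \<sigma>" "\<forall>x\<in>L. (\<sigma> ^^ aut_ord L \<sigma>) x = x"
  using LeastI_ex[OF assms[unfolded has_finite_order_def]] unfolding aut_ord_def by blast+

lemma ec_torsion_eq_base_if_Gal_fixed:
  assumes LK: "galois_ext L K"
    and fixed: "\<And>\<sigma> P. \<sigma> \<in> Gal L K \<Longrightarrow> P \<in> ec_torsion a b L q \<Longrightarrow> ecpt_map \<sigma> P = P"
  shows "ec_torsion a b L q = ec_torsion a b K q"
proof
  show "ec_torsion a b L q \<subseteq> ec_torsion a b K q"
  proof
    fix P assume P: "P \<in> ec_torsion a b L q"
    have "ecpt_in K P"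
    proof (cases P)
      case (Aff x y)
      then have "x \<in> L" "y \<in> L" using P by (auto simp: ec_torsion_def ec_points_def)
      moreover have "\<forall>\<sigma>\<in>Gal L K. \<sigma> x = x \<and> \<sigma> y = y" using fixed[OF _ P] Aff by simp
      ultimately show ?thesis using Gal_fixed_imp_base[OF LK] Aff by auto
    qed simp
    then show "P \<in> ec_torsion a b K q" using ec_torsion_in_subfield P by blast
  qed
  show "ec_torsion a b K q \<subseteq> ec_torsion a b L q"
    by (rule ec_torsion_mono[OF galois_ext_subset[OF LK]])
qed

section \<open>Quadratic twists\<close>

text \<open>For s^2 = d, the map (x, y) \<mapsto> (d x, d s y) is an isomorphism from E onto E_d, defined over
  any field containing s.\<close>

definition twist_map :: "complex \<Rightarrow> complex \<Rightarrow> ecpt \<Rightarrow> ecpt" where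
  "twist_map d s P = (case P of Inf \<Rightarrow> Inf | Aff x y \<Rightarrow> Aff (d * x) (d * s * y))"

lemma twist_map_simps [simp]:
  "twist_map d s Inf = Inf" "twist_map d s (Aff x y) = Aff (d * x) (d * s * y)"
  by (simp_all add: twist_map_def)

context
  fixes d s :: complex
  assumes s: "s ^ 2 = d" "s \<noteq> 0"
begin

lemma twist_map_inj: "inj (twist_map d s)"
proof (rule injI)
  fix P Q assume "twist_map d s P = twist_map d s Q"
  then show "P = Q" using s by (cases P; cases Q) auto
qed

lemma twist_ec_slope:
  "ec_slope (twist_a d a) (d * x1) (d * s * y1) (d * x2) (d * s * y2) = s * ec_slope a x1 y1 x2 y2"
  using s by (cases "x1 = x2"; cases "y1 = 0")
    (auto simp: ec_slope_def twist_a_def field_simps power2_eq_square)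

lemma twist_map_add:
  "twist_map d s (ec_add a b P Q) =
    ec_add (twist_a d a) (twist_b d b) (twist_map d s P) (twist_map d s Q)"
proof (cases P; cases Q)
  fix x1 y1 x2 y2 assume PQ: "P = Aff x1 y1" "Q = Aff x2 y2"
  have "d \<noteq> 0" using s by auto
  then have c1: "d * x1 = d * x2 \<longleftrightarrow> x1 = x2"
    and c2: "d * s * y1 = - (d * s * y2) \<longleftrightarrow> y1 = - y2"
    using s(2) by (simp, metis minus_mult_right mult_cancel_left mult_eq_0_iff)
  show ?thesis unfolding PQ twist_map_simps ec_add_Aff twist_ec_slope c1 c2 Let_def
    by (simp add: s(1) algebra_simps)
qed simp_all

lemma twist_map_smul:
  "twist_map d s (ec_smul a b n P) = ec_smul (twist_a d a) (twist_b d b) n (twist_map d s P)"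
  by (induction n) (simp_all add: ec_smul_0 ec_smul_Suc twist_map_add)

lemma twist_map_eq_Inf_iff: "twist_map d s P = Inf \<longleftrightarrow> P = Inf"
  by (cases P) simp_all

lemma twist_map_points:
  assumes F: "is_subfield F" "s \<in> F"
  shows "twist_map d s ` ec_points a b F = ec_points (twist_a d a) (twist_b d b) F"
proof -
  have R: "is_subring F" using subfield_is_subring[OF F(1)] .
  have d: "d \<in> F" using subring_power[OF R F(2), of 2] s(1) by simp
  have d0: "d \<noteq> 0" using s by auto
  have on_curve: "(d * s * y) ^ 2 = (d * x) ^ 3 + twist_a d a * (d * x) + twist_b d b \<longleftrightarrow>
      y ^ 2 = x ^ 3 + a * x + b" for x y
  proof -
    have "(d * s * y) ^ 2 = d ^ 3 * y ^ 2"
      "(d * x) ^ 3 + twist_a d a * (d * x) + twist_b d b = d ^ 3 * (x ^ 3 + a * x + b)"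
      using s(1)
      by (simp_all add: twist_a_def twist_b_def power2_eq_square power3_eq_cube algebra_simps)
    then show ?thesis using d0 by simp
  qed
  show ?thesis
  proof (intro equalityI subsetI)
    fix Q assume "Q \<in> twist_map d s ` ec_points a b F"
    then obtain P where "P \<in> ec_points a b F" "Q = twist_map d s P" by blast
    then show "Q \<in> ec_points (twist_a d a) (twist_b d b) F"
      using on_curve d F(2) subring_mult[OF R] by (cases P) (auto simp: ec_points_def)
  next
    fix Q assume Q: "Q \<in> ec_points (twist_a d a) (twist_b d b) F"
    show "Q \<in> twist_map d s ` ec_points a b F"
    proof (cases Q)
      case Inf
      then show ?thesis by (force simp: ec_points_def)
    next
      case (Aff X Y)
      then have XY: "X \<in> F" "Y \<in> F" "Y ^ 2 = X ^ 3 + twist_a d a * X + twist_b d b"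
        using Q by (auto simp: ec_points_def)
      define x y where "x = X / d" and "y = Y / (d * s)"
      have xy: "x \<in> F" "y \<in> F"
        using XY d F subfield_divide[OF F(1)] subring_mult[OF R] by (simp_all add: x_def y_def)
      have "d * x = X" "d * s * y = Y" using d0 s(2) by (simp_all add: x_def y_def)
      then have "Q = twist_map d s (Aff x y)" "y ^ 2 = x ^ 3 + a * x + b"
        using Aff on_curve[of y x] XY(3) by simp_all
      then show ?thesis using xy unfolding ec_points_def by blast
    qed
  qed
qed

lemma twist_map_torsion:
  assumes F: "is_subfield F" "s \<in> F"
  shows "bij_betw (twist_map d s) (ec_torsion a b F q) (ec_torsion (twist_a d a) (twist_b d b) F q)"
proof -
  have smul: "ec_smul (twist_a d a) (twist_b d b) q (twist_map d s P) = Inf \<longleftrightarrow>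
      ec_smul a b q P = Inf" for P
    using twist_map_smul[of a b q P] twist_map_eq_Inf_iff by metis
  have "twist_map d s ` ec_torsion a b F q = ec_torsion (twist_a d a) (twist_b d b) F q"
    unfolding ec_torsion_def twist_map_points[OF F, symmetric] using smul by blast
  then show ?thesis unfolding bij_betw_def using inj_on_subset[OF twist_map_inj] by blast
qed

lemma ec_group_iso_twist:
  assumes "is_subfield F" "s \<in> F"
  shows "ec_group_iso a b (ec_torsion a b F q)
    (twist_a d a) (twist_b d b) (ec_torsion (twist_a d a) (twist_b d b) F q)"
  unfolding ec_group_iso_def using twist_map_torsion[OF assms] twist_map_add by blast

end

lemma (in gal_aut) ecpt_map_twist_map:
  assumes P: "ecpt_in L P" and s: "s \<in> L" and d: "d \<in> K"
    and sign: "(\<sigma> s = s \<and> ecpt_map \<sigma> P = P) \<or> (\<sigma> s = - s \<and> ecpt_map \<sigma> P = ecpt_neg P)"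
  shows "ecpt_map \<sigma> (twist_map d s P) = twist_map d s P"
proof (cases P)
  case (Aff x y)
  have "d \<in> L" "\<sigma> d = d" using d base_subset aut_base by auto
  then show ?thesis using Aff P s sign by auto
qed simp

section \<open>The Galois action on a cyclic torsion group\<close>

locale galois_torsion = cyclic_enum "ec_add a b" "ec_torsion a b L q" q f
  for a b :: complex and L :: "complex set" and q :: nat and f :: "nat \<Rightarrow> ecpt" +
  fixes K :: "complex set"
  assumes galois: "galois_ext L K" and a_in_K: "a \<in> K" and b_in_K: "b \<in> K"
    and finite_order: "\<forall>\<sigma>\<in>Gal L K. has_finite_order L \<sigma>"
begin

lemma torsion_in_L: "P \<in> ec_torsion a b L q \<Longrightarrow> ecpt_in L P"
  using ec_points_in by (auto simp: ec_torsion_def)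

lemma enum_0_Inf: "f 0 = Inf"
  by (rule enum_zero[OF Inf_in_ec_torsion]) simp

lemma Gal_acts_by_unit:
  assumes \<sigma>: "\<sigma> \<in> Gal L K"
  obtains c where "coprime c q" "[c ^ aut_ord L \<sigma> = 1] (mod q)"
    "\<And>i. i < q \<Longrightarrow> ecpt_map \<sigma> (f i) = f (c * i mod q)"
proof -
  interpret gal_aut L K \<sigma> using galois \<sigma> by unfold_locales
  let ?S = "ec_torsion a b L q"
  have maps: "\<And>P. P \<in> ?S \<Longrightarrow> ecpt_map \<sigma> P \<in> ?S"
    using ecpt_map_torsion[OF a_in_K b_in_K] .
  have hom: "\<And>P Q. P \<in> ?S \<Longrightarrow> Q \<in> ?S \<Longrightarrow>
      ecpt_map \<sigma> (ec_add a b P Q) = ec_add a b (ecpt_map \<sigma> P) (ecpt_map \<sigma> Q)"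
    using ecpt_map_add[OF a_in_K] torsion_in_L by blast
  obtain c where c: "\<And>i. i < q \<Longrightarrow> ecpt_map \<sigma> (f i) = f (c * i mod q)"
    using endo_is_mult[where h = "ecpt_map \<sigma>", OF maps hom] by blast
  have "finite ?S" using bij_betw_finite[OF bij] by simp
  moreover have "inj_on (ecpt_map \<sigma>) ?S" using inj_on_subset[OF ecpt_map_inj] torsion_in_L by blast
  ultimately have "ecpt_map \<sigma> ` ?S = ?S" using endo_inj_surj maps by blast
  then have "coprime c q" using mult_coprime[OF c] enum_in[OF order_gt_1] by simp
  moreover have "(ecpt_map \<sigma> ^^ aut_ord L \<sigma>) (f 1) = f 1"
    using aut_ord_works(2) finite_order \<sigma> torsion_in_L[OF enum_in[OF order_gt_1]]
    by (cases "f 1") (simp_all add: ecpt_map_iterate)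
  then have "[c ^ aut_ord L \<sigma> = 1] (mod q)" using mult_order[OF c] by blast
  ultimately show ?thesis using that c by blast
qed

lemma Gal_fixes_torsion:
  assumes \<sigma>: "\<sigma> \<in> Gal L K" and gcd: "gcd (totient q) (aut_ord L \<sigma>) = 1"
    and P: "P \<in> ec_torsion a b L q"
  shows "ecpt_map \<sigma> P = P"
proof -
  obtain c where c: "coprime c q" "[c ^ aut_ord L \<sigma> = 1] (mod q)"
    and mult: "\<And>i. i < q \<Longrightarrow> ecpt_map \<sigma> (f i) = f (c * i mod q)"
    using Gal_acts_by_unit[OF \<sigma>] by blast
  have "[c = 1] (mod q)" using cong_pow_gcd_totient[OF c] gcd by simp
  then show ?thesis using mult_cong_one[OF mult _ P] by blast
qed

lemma Gal_acts_by_sign: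
  assumes p: "prime p" "odd p" "q = p ^ k"
    and \<sigma>: "\<sigma> \<in> Gal L K" and gcd: "gcd (totient q) (aut_ord L \<sigma>) \<le> 2"
  shows "(\<forall>P\<in>ec_torsion a b L q. ecpt_map \<sigma> P = P) \<or>
    (\<forall>P\<in>ec_torsion a b L q. ecpt_map \<sigma> P = ecpt_neg P)"
proof -
  obtain c where c: "coprime c q" "[c ^ aut_ord L \<sigma> = 1] (mod q)"
    and mult: "\<And>i. i < q \<Longrightarrow> ecpt_map \<sigma> (f i) = f (c * i mod q)"
    using Gal_acts_by_unit[OF \<sigma>] by blast
  let ?g = "gcd (totient q) (aut_ord L \<sigma>)"
  have "?g \<noteq> 0" using order_gt_1 by simp
  then have "?g = 1 \<or> ?g = 2" using gcd by linarith
  then have "?g dvd 2" by auto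
  then obtain m where "2 = ?g * m" by blast
  then have "c ^ 2 = (c ^ ?g) ^ m" by (metis power_mult)
  then have "[c ^ 2 = 1] (mod q)" using cong_pow[OF cong_pow_gcd_totient[OF c], of m] by simp
  then consider "[c = 1] (mod q)" | "[c + 1 = 0] (mod q)"
    using cong_square_one_odd_prime_power[OF p(1,2)] p(3) by blast
  then show ?thesis
  proof cases
    case 1
    then show ?thesis using mult_cong_one[OF mult] by blast
  next
    case 2
    then have "ec_add a b P (ecpt_map \<sigma> P) = Inf" if "P \<in> ec_torsion a b L q" for P
      using mult_cong_minus_one[OF mult _ that] enum_0_Inf by simp
    then show ?thesis using ec_add_eq_Inf_imp_neg by blast
  qed
qed

lemma torsion_eq_base_if_gcd_one:
  assumes "\<forall>\<sigma>\<in>Gal L K. gcd (totient q) (aut_ord L \<sigma>) = 1"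
  shows "ec_torsion a b L q = ec_torsion a b K q"
  using ec_torsion_eq_base_if_Gal_fixed[OF galois] Gal_fixes_torsion assms by blast

lemma generator_Aff:
  assumes "odd q"
  obtains x0 y0 where "f 1 = Aff x0 y0" "y0 \<noteq> 0"
proof (cases "f 1")
  case Inf
  then show ?thesis using enum_0_Inf enum_eq_iff[of 1 0] order_gt_1 by simp
next
  case (Aff x0 y0)
  have "y0 \<noteq> 0"
  proof
    assume "y0 = 0"
    then have "f ((1 + 1) mod q) = f 0" using enum_add[of 1 1] Aff enum_0_Inf order_gt_1 by simp
    then have "(1 + 1) mod q = 0" using enum_eq_iff[of "(1 + 1) mod q" 0] order_gt_1 by simp
    then have "q dvd 2" by (simp only: mod_eq_0_iff_dvd one_add_one)
    then show False using assms order_gt_1 dvd_imp_le[of q 2] by (cases "q = 2") auto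
  qed
  then show ?thesis using that Aff by blast
qed

lemma generator_sign:
  assumes p: "prime p" "odd p" "q = p ^ k"
    and \<sigma>: "\<sigma> \<in> Gal L K" and gcd: "gcd (totient q) (aut_ord L \<sigma>) \<le> 2"
    and gen: "f 1 = Aff x0 y0" and P: "P \<in> ec_torsion a b L q"
  shows "(\<sigma> y0 = y0 \<and> ecpt_map \<sigma> P = P) \<or> (\<sigma> y0 = - y0 \<and> ecpt_map \<sigma> P = ecpt_neg P)"
proof -
  have gen_in: "Aff x0 y0 \<in> ec_torsion a b L q" using gen enum_in[OF order_gt_1] by simp
  from Gal_acts_by_sign[OF p \<sigma> gcd] show ?thesis
  proof
    assume "\<forall>P\<in>ec_torsion a b L q. ecpt_map \<sigma> P = P"
    then have "ecpt_map \<sigma> (Aff x0 y0) = Aff x0 y0" "ecpt_map \<sigma> P = P" using gen_in P by blast+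
    then show ?thesis by simp
  next
    assume "\<forall>P\<in>ec_torsion a b L q. ecpt_map \<sigma> P = ecpt_neg P"
    then have "ecpt_map \<sigma> (Aff x0 y0) = ecpt_neg (Aff x0 y0)" "ecpt_map \<sigma> P = ecpt_neg P"
      using gen_in P by blast+
    then show ?thesis by simp
  qed
qed

lemma generator_square_in_base:
  assumes p: "prime p" "odd p" "q = p ^ k"
    and gcd: "\<forall>\<sigma>\<in>Gal L K. gcd (totient q) (aut_ord L \<sigma>) \<le> 2"
    and gen: "f 1 = Aff x0 y0"
  shows "y0 ^ 2 \<in> K"
proof (rule Gal_fixed_imp_base[OF galois])
  have "Aff x0 y0 \<in> ec_torsion a b L q" using gen enum_in[OF order_gt_1] by simp
  then have y0: "y0 \<in> L" using torsion_in_L by fastforce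
  then show "y0 ^ 2 \<in> L"
    using subring_power[OF subfield_is_subring[OF galois_ext_subfield[OF galois]]] by blast
  show "\<forall>\<sigma>\<in>Gal L K. \<sigma> (y0 ^ 2) = y0 ^ 2"
  proof
    fix \<sigma> assume \<sigma>: "\<sigma> \<in> Gal L K"
    interpret gal_aut L K \<sigma> using galois \<sigma> by unfold_locales
    have "\<sigma> y0 = y0 \<or> \<sigma> y0 = - y0"
      using generator_sign[OF p \<sigma> bspec[OF gcd \<sigma>] gen Inf_in_ec_torsion] by blast
    then show "\<sigma> (y0 ^ 2) = y0 ^ 2" using y0 by auto
  qed
qed

lemma twist_torsion_eq_base:
  assumes p: "prime p" "odd p" "q = p ^ k"
    and gcd: "\<forall>\<sigma>\<in>Gal L K. gcd (totient q) (aut_ord L \<sigma>) \<le> 2"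
  shows "\<exists>d\<in>K. d \<noteq> 0 \<and> (\<exists>s\<in>L. s ^ 2 = d) \<and>
    ec_group_iso a b (ec_torsion a b L q) (twist_a d a) (twist_b d b)
      (ec_torsion (twist_a d a) (twist_b d b) L q) \<and>
    ec_torsion (twist_a d a) (twist_b d b) L q = ec_torsion (twist_a d a) (twist_b d b) K q"
proof -
  have "odd q" using p by simp
  then obtain x0 y0 where gen: "f 1 = Aff x0 y0" "y0 \<noteq> 0" using generator_Aff by blast
  have y0: "y0 \<in> L" using gen(1) enum_in[OF order_gt_1] torsion_in_L by fastforce
  define d where "d = y0 ^ 2"
  have "d \<in> K" using generator_square_in_base[OF p gcd gen(1)] unfolding d_def .
  have sign: "(\<sigma> y0 = y0 \<and> ecpt_map \<sigma> P = P) \<or> (\<sigma> y0 = - y0 \<and> ecpt_map \<sigma> P = ecpt_neg P)"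
    if "\<sigma> \<in> Gal L K" "P \<in> ec_torsion a b L q" for \<sigma> P
    using generator_sign[OF p that(1) bspec[OF gcd that(1)] gen(1) that(2)] .
  have s: "y0 ^ 2 = d" "y0 \<noteq> 0" using gen(2) unfolding d_def by simp_all
  have L: "is_subfield L" using galois_ext_subfield[OF galois] .
  have twist_image:
    "twist_map d y0 ` ec_torsion a b L q = ec_torsion (twist_a d a) (twist_b d b) L q"
    using bij_betw_imp_surj_on[OF twist_map_torsion[OF s L y0]] .
  have twist_eq:
    "ec_torsion (twist_a d a) (twist_b d b) L q = ec_torsion (twist_a d a) (twist_b d b) K q"
  proof (rule ec_torsion_eq_base_if_Gal_fixed[OF galois])
    fix \<sigma> Q assume \<sigma>: "\<sigma> \<in> Gal L K" and "Q \<in> ec_torsion (twist_a d a) (twist_b d b) L q"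
    then obtain P where P: "P \<in> ec_torsion a b L q" "Q = twist_map d y0 P"
      unfolding twist_image[symmetric] by blast
    interpret gal_aut L K \<sigma> using galois \<sigma> by unfold_locales
    show "ecpt_map \<sigma> Q = Q"
      unfolding P(2)
      by (rule ecpt_map_twist_map[OF torsion_in_L[OF P(1)] y0 \<open>d \<in> K\<close> sign[OF \<sigma> P(1)]])
  qed
  show ?thesis
  proof (rule bexI[of _ d], intro conjI)
    show "d \<noteq> 0" using s by auto
    show "\<exists>s\<in>L. s ^ 2 = d" using s(1) y0 by blast
    show "ec_group_iso a b (ec_torsion a b L q) (twist_a d a) (twist_b d b)
        (ec_torsion (twist_a d a) (twist_b d b) L q)"
      by (rule ec_group_iso_twist[OF s L y0])
  qed (use twist_eq \<open>d \<in> K\<close> in simp_all)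
qed

end

theorem lemma4p1:
  fixes K L :: "complex set" and a b :: complex and q :: nat
  assumes K: "number_field K"
    and LK: "galois_ext L K"
    and fin: "\<forall>\<sigma>\<in>Gal L K. has_finite_order L \<sigma>"
    and E: "a \<in> K" "b \<in> K" "elliptic a b"
    and q: "\<exists>p k. prime p \<and> k \<ge> 1 \<and> q = p ^ k" "odd q"
    and cyc: "cyclic_of_order a b (ec_torsion a b L q) q"
  shows "((\<forall>\<sigma>\<in>Gal L K. gcd (totient q) (aut_ord L \<sigma>) = 1)
            \<longrightarrow> ec_torsion a b L q = ec_torsion a b K q)
       \<and> ((\<forall>\<sigma>\<in>Gal L K. gcd (totient q) (aut_ord L \<sigma>) \<le> 2)
            \<longrightarrow> (\<exists>d\<in>K. d \<noteq> 0 \<and> (\<exists>s\<in>L. s ^ 2 = d) \<and>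
                  ec_group_iso a b (ec_torsion a b L q)
                    (twist_a d a) (twist_b d b) (ec_torsion (twist_a d a) (twist_b d b) L q) \<and>
                  ec_torsion (twist_a d a) (twist_b d b) L q
                    = ec_torsion (twist_a d a) (twist_b d b) K q))"
proof -
  obtain p k where p: "prime p" "1 \<le> k" "q = p ^ k" using q(1) by blast
  have "odd p" using q(2) p(2,3) by simp
  have "1 < p ^ k" using p(2) by (intro one_less_power prime_gt_1_nat[OF p(1)]) simp
  then have "1 < q" using p(3) by simp
  obtain f where "bij_betw f {0..<q} (ec_torsion a b L q)"
    and "\<forall>i<q. \<forall>j<q. f ((i + j) mod q) = ec_add a b (f i) (f j)"
    using cyc unfolding cyclic_of_order_def by blast
  then interpret galois_torsion a b L q f K
    using \<open>1 < q\<close> LK E(1,2) fin by unfold_locales blast+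
  show ?thesis using torsion_eq_base_if_gcd_one twist_torsion_eq_base[OF p(1) \<open>odd p\<close> p(3)] by blast
qed

end
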